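(* Let $S$ be a simple $(l,r)$-framed algebra. Let $\alpha_1,\alpha_2\in C_S$, $(d,c)\in I_S$, $a_1\in S_{(0,\alpha_1)}$, $a_2\in S_{(0,\alpha_2)}$ and $v\in S_{(d,c)}$. Then $a_2\cdot(a_1\cdot v)=(-1)^{|\alpha_1\alpha_2|}a_1\cdot(a_2\cdot v)$ and $a_1\cdot(a_2\cdot v)=(a_1\cdot a_2)\cdot v$. In particular $A_S(0)=\bigoplus_{\alpha}S_{(0,\alpha)}$ is an associative algebra and $S$ is an $A_S(0)$-module.
   Context: Let $\mathrm{IS}=\{0,\frac12,\frac1{16}\}$ with fusion rule $\star$ (values are subsets): $0\star h=h\star0=\{h\}$, $\frac12\star\frac12=\{0\}$, $\frac12\star\frac1{16}=\frac1{16}\star\frac12=\{\frac1{16}\}$, $\frac1{16}\star\frac1{16}=\{0,\frac12\}$; $A(h_0,h_1,h_2,h_3)=\{h: h\in h_2\star h_3,\ h_0\in h_1\star h\}$. For $h\in A(h_0,h_1,h_2,h_3)$, $h'\in A(h_0,h_2,h_1,h_3)$ define $B^{h,h'}_{h_0,h_1,h_2,h_3}$: $B_{*,0,*,*}=B_{*,*,0,*}=1$; $B_{*,\frac12,\frac12,*}=-1$; $B_{a,\frac12,\frac1{16},a'}=B_{a,\frac1{16},\frac12,a'}=i$ if $a$ or $a'$ is $\frac12$, else $-i$; $B^{b,b'}_{a,\frac1{16},\frac1{16},a'}=e^{-\pi i/8}\cdot\{1$ if $a,a'\ne\frac1{16},a=a'$; $i$ if $a,a'\neq\frac1{16},a\ne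 a'$; $\frac{1+i}2$ if $a=a'=\frac1{16},b=b'$; $\frac{1-i}2$ if $a=a'=\frac1{16},b\neq b'\}$. $\mathrm{IS}^{(l,r)}=\mathrm{IS}^l\times\mathrm{IS}^r$, $\lambda=(h_1,..,h_l,\bar h_1,..,\bar h_r)$, $s(\lambda)=\sum h_i-\sum\bar h_j$; $\star$, $A$ componentwise; $B^{\lambda,\lambda'}_{\lambda^0,\dots,\lambda^3}=\prod_{i\le l}B^{h_i,h'_i}_{h^0_i,\dots,h^3_i}\prod_{j\le r}\overline{B^{\bar h_j,\bar h'_j}_{\bar h^0_j,\dots,\bar h^3_j}}$. An $(l,r)$-framed algebra: finite-dimensional $\mathrm{IS}^{(l,r)}$-graded $S=\bigoplus S_\lambda$ over $\mathbb{C}$ with bilinear product, nonzero $1\in S_0$, $a\cdot_\lambda b$ the $S_\lambda$-component of $a\cdot b$, satisfying (FA1) $S_\lambda=0$ unless $s(\lambda)\in\mathbb{Z}$; (FA2) $S_0=\mathbb{C}1$, $1$ a two-sided unit; (FA3) $S_{\lambda^1}\cdot S_{\lambda^2}\subset\bigoplus_{\lambda\in\lambda^1\star\lambda^2}S_\lambda$; (FA4) $a_2\cdot_{\lambda^0}(a_1\cdot_{\lambda'}a_3)=\sum_{\lambda\in A(\lambda^0,\lambda^1,\lambda^2,\lambda^3)}B^{\lambda,\lambda'}_{\lambda^0,\lambda^1,\lambda^2,\lambda^3}a_1\cdot_{\lambda^0}(a_2\cdot_\lambda a_3)$ for $a_i\in S_{\lambda^i}$, $\lambda'\in A(\lambda^0,\lambda^2,\lambda^1,\lambda^3)$.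 Ideal: graded subspace $M$ with $S\cdot M\subset M$; simple: only ideals $0$ and $S$. Identify $\mathrm{IS}$ with $\{(d,c)\in\mathbb{Z}_2^2:dc=0\}$ via $0\leftrightarrow(0,0)$, $\frac12\leftrightarrow(0,1)$, $\frac1{16}\leftrightarrow(1,0)$, and componentwise $\mathrm{IS}^{(l,r)}$ with pairs $(d,c)\in(\mathbb{Z}_2^{l+r})^2$, $dc=0$. For $c\in\mathbb{Z}_2^{l+r}$, $|c|=|c|_l-|c|_r$ where $|c|_l,|c|_r$ count ones in the first $l$ and last $r$ coordinates. $C_S=\{\alpha:S_{(0,\alpha)}\ne0\}$, $I_S=\{(d,c):S_{(d,c)}\ne0\}$. *)

theory Defs
  imports Complex_Main
begin

datatype IS = H0 | Hhalf | H16

lemma UNIV_IS: "(UNIV :: IS set) = {H0, Hhalf, H16}"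
  by (auto intro: IS.exhaust)

instance IS :: finite
  by standard (simp add: UNIV_IS)

fun wt :: "IS \<Rightarrow> real" where
  "wt H0 = 0" | "wt Hhalf = 1/2" | "wt H16 = 1/16"

fun fusion :: "IS \<Rightarrow> IS \<Rightarrow> IS set" where
  "fusion H0 h = {h}"
| "fusion h H0 = {h}"
| "fusion Hhalf Hhalf = {H0}"
| "fusion Hhalf H16 = {H16}"
| "fusion H16 Hhalf = {H16}"
| "fusion H16 H16 = {H0, Hhalf}"

text \<open>The braiding coefficients  B^{h,h'}_{h0,h1,h2,h3}  (argument order: h h' h0 h1 h2 h3).
  Values at index combinations that can never occur (h0 or h3 equal to 1/16 but not both,
  when h1 = h2 = 1/16) are irrelevant and set to 0.\<close>
definition Bc :: "IS \<Rightarrow> IS \<Rightarrow> IS \<Rightarrow> IS \<Rightarrow> IS \<Rightarrow> IS \<Rightarrow> complex" where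
  "Bc b b' a h1 h2 a' =
    (if h1 = H0 \<or> h2 = H0 then 1
     else if h1 = Hhalf \<and> h2 = Hhalf then -1
     else if (h1 = Hhalf \<and> h2 = H16) \<or> (h1 = H16 \<and> h2 = Hhalf) then
       (if a = Hhalf \<or> a' = Hhalf then \<i> else - \<i>)
     else \<comment> \<open>h1 = h2 = 1/16\<close>
       cis (- pi / 8) *
       (if a \<noteq> H16 \<and> a' \<noteq> H16 then (if a = a' then 1 else \<i>)
        else if a = H16 \<and> a' = H16 then (if b = b' then (1 + \<i>) / 2 else (1 - \<i>) / 2)
        else 0))"

text \<open>The first l entries are the h_i, the last r entries are the \<bar>h_j.\<close>
definition grades :: "nat \<Rightarrow> nat \<Rightarrow> IS list set" where
  "grades l r = {g. length g = l + r}"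

definition fusionL :: "IS list \<Rightarrow> IS list \<Rightarrow> IS list set" where
  "fusionL xs ys = {zs. length zs = length xs \<and> length ys = length xs \<and>
                        (\<forall>i<length xs. zs ! i \<in> fusion (xs ! i) (ys ! i))}"

definition AL :: "IS list \<Rightarrow> IS list \<Rightarrow> IS list \<Rightarrow> IS list \<Rightarrow> IS list set" where
  "AL h0 h1 h2 h3 = {h. h \<in> fusionL h2 h3 \<and> h0 \<in> fusionL h1 h}"

definition BL :: "nat \<Rightarrow> nat \<Rightarrow> IS list \<Rightarrow> IS list \<Rightarrow> IS list \<Rightarrow> IS list \<Rightarrow> IS list \<Rightarrow> IS list \<Rightarrow> complex" where
  "BL l r hs hs' h0 h1 h2 h3 =
     (\<Prod>i<l. Bc (hs ! i) (hs' ! i) (h0 ! i) (h1 ! i) (h2 ! i) (h3 ! i)) *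
     (\<Prod>j\<in>{l..<l+r}. cnj (Bc (hs ! j) (hs' ! j) (h0 ! j) (h1 ! j) (h2 ! j) (h3 ! j)))"

definition sL :: "nat \<Rightarrow> nat \<Rightarrow> IS list \<Rightarrow> real" where
  "sL l r g = (\<Sum>i<l. wt (g ! i)) - (\<Sum>j\<in>{l..<l+r}. wt (g ! j))"

definition zeroL :: "nat \<Rightarrow> nat \<Rightarrow> IS list" where
  "zeroL l r = replicate (l + r) H0"

text \<open>The algebra S is the whole carrier type 'v, a vector space over \<complex> with scalar
  multiplication scale; the grading is given by the family of component projections
  proj g (so S_g = range (proj g)); mult is the product and one the unit.\<close>

definition framed_algebra ::
  "nat \<Rightarrow> nat \<Rightarrow> (complex \<Rightarrow> 'v::ab_group_add \<Rightarrow> 'v) \<Rightarrow> ('v \<Rightarrow> 'v \<Rightarrow> 'v)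
     \<Rightarrow> (IS list \<Rightarrow> 'v \<Rightarrow> 'v) \<Rightarrow> 'v \<Rightarrow> bool" where
  "framed_algebra l r scale mult proj one \<longleftrightarrow>
     vector_space scale
   \<and> (\<exists>B. finite B \<and> module.span scale B = UNIV)
   \<comment> \<open>grading S = \<Oplus>_{g \<in> IS^(l,r)} S_g\<close>
   \<and> (\<forall>g. Vector_Spaces.linear scale scale (proj g))
   \<and> (\<forall>g m x. proj g (proj m x) = (if g = m then proj g x else 0))
   \<and> (\<forall>g. g \<notin> grades l r \<longrightarrow> (\<forall>x. proj g x = 0))
   \<and> (\<forall>x. x = (\<Sum>g\<in>grades l r. proj g x))
   \<comment> \<open>bilinear product\<close>
   \<and> (\<forall>z. Vector_Spaces.linear scale scale (\<lambda>x. mult x z)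
          \<and> Vector_Spaces.linear scale scale (mult z))
   \<comment> \<open>(FA1)\<close>
   \<and> (\<forall>g. sL l r g \<notin> \<int> \<longrightarrow> (\<forall>x. proj g x = 0))
   \<comment> \<open>(FA2)\<close>
   \<and> one \<noteq> 0
   \<and> range (proj (zeroL l r)) = {scale c one | c. True}
   \<and> (\<forall>x. mult one x = x \<and> mult x one = x)
   \<comment> \<open>(FA3)\<close>
   \<and> (\<forall>g1 g2 x y. x \<in> range (proj g1) \<longrightarrow> y \<in> range (proj g2) \<longrightarrow>
         (\<forall>g. g \<notin> fusionL g1 g2 \<longrightarrow> proj g (mult x y) = 0))
   \<comment> \<open>(FA4)\<close>
   \<and> (\<forall>g0 g1 g2 g3 g' a1 a2 a3.
         g0 \<in> grades l r \<longrightarrow> g1 \<in> grades l r \<longrightarrow> g2 \<in> grades l r \<longrightarrow> g3 \<in> grades l r \<longrightarrow>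
         a1 \<in> range (proj g1) \<longrightarrow> a2 \<in> range (proj g2) \<longrightarrow> a3 \<in> range (proj g3) \<longrightarrow>
         g' \<in> AL g0 g2 g1 g3 \<longrightarrow>
         proj g0 (mult a2 (proj g' (mult a1 a3))) =
           (\<Sum>g\<in>AL g0 g1 g2 g3.
              scale (BL l r g g' g0 g1 g2 g3) (proj g0 (mult a1 (proj g (mult a2 a3))))))"

definition graded_ideal ::
  "(complex \<Rightarrow> 'v::ab_group_add \<Rightarrow> 'v) \<Rightarrow> ('v \<Rightarrow> 'v \<Rightarrow> 'v) \<Rightarrow> (IS list \<Rightarrow> 'v \<Rightarrow> 'v) \<Rightarrow> 'v set \<Rightarrow> bool" where
  "graded_ideal scale mult proj M \<longleftrightarrow>
     module.subspace scale M
   \<and> (\<forall>g x. x \<in> M \<longrightarrow> proj g x \<in> M)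
   \<and> (\<forall>a x. x \<in> M \<longrightarrow> mult a x \<in> M)"

definition simple_framed_algebra ::
  "nat \<Rightarrow> nat \<Rightarrow> (complex \<Rightarrow> 'v::ab_group_add \<Rightarrow> 'v) \<Rightarrow> ('v \<Rightarrow> 'v \<Rightarrow> 'v)
     \<Rightarrow> (IS list \<Rightarrow> 'v \<Rightarrow> 'v) \<Rightarrow> 'v \<Rightarrow> bool" where
  "simple_framed_algebra l r scale mult proj one \<longleftrightarrow>
     framed_algebra l r scale mult proj one
   \<and> (\<forall>M. graded_ideal scale mult proj M \<longrightarrow> M = {0} \<or> M = UNIV)"

text \<open>(d,c) \<in> (Z_2^{l+r})^2 with dc = 0, as bool lists; 0 \<leftrightarrow> (0,0), 1/2 \<leftrightarrow> (0,1), 1/16 \<leftrightarrow> (1,0).\<close>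
definition enc :: "bool list \<Rightarrow> bool list \<Rightarrow> IS list" where
  "enc d c = map2 (\<lambda>a b. if a then H16 else if b then Hhalf else H0) d c"

definition encC :: "bool list \<Rightarrow> IS list" where
  "encC \<alpha> = enc (replicate (length \<alpha>) False) \<alpha>"

definition C_S :: "nat \<Rightarrow> nat \<Rightarrow> (IS list \<Rightarrow> 'v::zero \<Rightarrow> 'v) \<Rightarrow> bool list set" where
  "C_S l r proj = {\<alpha>. length \<alpha> = l + r \<and> range (proj (encC \<alpha>)) \<noteq> {0}}"

definition I_S :: "nat \<Rightarrow> nat \<Rightarrow> (IS list \<Rightarrow> 'v::zero \<Rightarrow> 'v) \<Rightarrow> (bool list \<times> bool list) set" where
  "I_S l r proj = {(d, c). length d = l + r \<and> length c = l + r \<and>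
                           (\<forall>i<l+r. \<not> (d ! i \<and> c ! i)) \<and> range (proj (enc d c)) \<noteq> {0}}"

definition csize :: "nat \<Rightarrow> nat \<Rightarrow> bool list \<Rightarrow> int" where
  "csize l r c = int (card {i. i < l \<and> c ! i}) - int (card {i. l \<le> i \<and> i < l + r \<and> c ! i})"

definition cmul :: "bool list \<Rightarrow> bool list \<Rightarrow> bool list" where
  "cmul \<alpha>1 \<alpha>2 = map2 (\<and>) \<alpha>1 \<alpha>2"

definition AS0 :: "nat \<Rightarrow> nat \<Rightarrow> (complex \<Rightarrow> 'v::ab_group_add \<Rightarrow> 'v) \<Rightarrow> (IS list \<Rightarrow> 'v \<Rightarrow> 'v) \<Rightarrow> 'v set" where
  "AS0 l r scale proj = module.span scale (\<Union>\<alpha>\<in>{\<alpha>. length \<alpha> = l + r}. range (proj (encC \<alpha>)))"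

end

theory Submission
  imports Defs
begin

(* For homogeneous elements whose grades make every fusion involved single-valued, the sum in
   (FA4) has one term, so a2 (a1 a3) = B a1 (a2 a3) with B a product of local braiding factors.
   Elements of S_(0,\<alpha>) have no 1/16 component, so this applies to them. The local factor for
   two 1/2's is -1, which gives the commutation sign. Taking a3 = 1 turns (FA4) into a braided
   commutativity x y = B y x; braiding a1 a2 past v and then v back past a1 and a2 gives
   (a1 a2) v = (-1)^N a1 (a2 v), where N counts the coordinates in which a1 a2 has 1/2 and v has
   1/16. If N is odd, braiding a1 a2 around v and back multiplies by the monodromy -1, so
   (a1 a2) v = 0 and hence a1 (a2 v) = 0 as well. The statements about A_S(0) follow by
   bilinearity. *)

(* fuse H16 H16 = H0 is an arbitrary pick from fusion H16 H16 = {0, 1/2}; fuse is only used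
   where the fusion is single-valued. *)
fun fuse :: "IS \<Rightarrow> IS \<Rightarrow> IS" where
  "fuse H0 h = h"
| "fuse h H0 = h"
| "fuse Hhalf Hhalf = H0"
| "fuse Hhalf H16 = H16"
| "fuse H16 Hhalf = H16"
| "fuse H16 H16 = H0"

lemma fusion_eq_fuse: "a \<noteq> H16 \<or> b \<noteq> H16 \<Longrightarrow> fusion a b = {fuse a b}"
  by (cases a; cases b) auto

lemma fuse_left_commute:
  "a \<noteq> H16 \<or> b \<noteq> H16 \<Longrightarrow> a \<noteq> H16 \<or> c \<noteq> H16 \<Longrightarrow> b \<noteq> H16 \<or> c \<noteq> H16 \<Longrightarrow>
   fuse b (fuse a c) = fuse a (fuse b c)"
  by (cases a; cases b; cases c) auto

lemma fuse_ne_H16: "a \<noteq> H16 \<Longrightarrow> b \<noteq> H16 \<Longrightarrow> fuse a b \<noteq> H16"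
  by (cases a; cases b) auto

definition fuse_list :: "IS list \<Rightarrow> IS list \<Rightarrow> IS list" where
  "fuse_list = map2 fuse"

definition unique_fusion :: "IS list \<Rightarrow> IS list \<Rightarrow> bool" where
  "unique_fusion = list_all2 (\<lambda>a b. a \<noteq> H16 \<or> b \<noteq> H16)"

lemma length_fuse_list [simp]: "length (fuse_list g1 g2) = min (length g1) (length g2)"
  by (simp add: fuse_list_def)

lemma nth_fuse_list [simp]:
  "i < length g1 \<Longrightarrow> i < length g2 \<Longrightarrow> fuse_list g1 g2 ! i = fuse (g1 ! i) (g2 ! i)"
  by (simp add: fuse_list_def)

lemma unique_fusion_iff:
  "unique_fusion g1 g2 \<longleftrightarrow>
     length g1 = length g2 \<and> (\<forall>i<length g1. g1 ! i \<noteq> H16 \<or> g2 ! i \<noteq> H16)"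
  by (simp add: unique_fusion_def list_all2_conv_all_nth)

lemma unique_fusion_untwisted_left:
  "H16 \<notin> set g1 \<Longrightarrow> length g1 = length g2 \<Longrightarrow> unique_fusion g1 g2"
  by (auto simp: unique_fusion_iff in_set_conv_nth)

lemma unique_fusion_untwisted_right:
  "H16 \<notin> set g2 \<Longrightarrow> length g1 = length g2 \<Longrightarrow> unique_fusion g1 g2"
  by (auto simp: unique_fusion_iff in_set_conv_nth)

lemmas unique_fusion_untwisted = unique_fusion_untwisted_left unique_fusion_untwisted_right

lemma unique_fusion_commute: "unique_fusion g1 g2 \<longleftrightarrow> unique_fusion g2 g1"
  by (auto simp: unique_fusion_iff)

lemma fusionL_eq_fuse_list: "unique_fusion g1 g2 \<Longrightarrow> fusionL g1 g2 = {fuse_list g1 g2}"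
  by (auto simp: fusionL_def unique_fusion_iff fusion_eq_fuse intro!: nth_equalityI)

lemma unique_fusion_fuse_list:
  "unique_fusion g1 g2 \<Longrightarrow> unique_fusion g1 g3 \<Longrightarrow> unique_fusion g1 (fuse_list g2 g3)"
  by (auto simp: unique_fusion_iff fuse_ne_H16)

lemma fuse_list_left_commute:
  "unique_fusion g1 g2 \<Longrightarrow> unique_fusion g1 g3 \<Longrightarrow> unique_fusion g2 g3 \<Longrightarrow>
   fuse_list g2 (fuse_list g1 g3) = fuse_list g1 (fuse_list g2 g3)"
  by (auto simp: unique_fusion_iff fuse_left_commute intro!: nth_equalityI)

lemma AL_unique_fusion:
  assumes "unique_fusion g1 g2" "unique_fusion g1 g3" "unique_fusion g2 g3"
  shows "AL (fuse_list g1 (fuse_list g2 g3)) g1 g2 g3 = {fuse_list g2 g3}"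
    and "AL (fuse_list g1 (fuse_list g2 g3)) g2 g1 g3 = {fuse_list g1 g3}"
proof -
  have "unique_fusion g1 (fuse_list g2 g3)" "unique_fusion g2 (fuse_list g1 g3)"
    using assms unique_fusion_commute unique_fusion_fuse_list by blast+
  with assms show "AL (fuse_list g1 (fuse_list g2 g3)) g1 g2 g3 = {fuse_list g2 g3}"
    and "AL (fuse_list g1 (fuse_list g2 g3)) g2 g1 g3 = {fuse_list g1 g3}"
    by (auto simp: AL_def fusionL_eq_fuse_list fuse_list_left_commute)
qed

lemma H16_notin_encC: "H16 \<notin> set (encC \<alpha>)"
  by (auto simp: encC_def enc_def in_set_conv_nth split: if_splits)

lemma length_encC [simp]: "length (encC \<alpha>) = length \<alpha>"
  by (simp add: encC_def enc_def)

lemma H16_notin_zeroL: "H16 \<notin> set (zeroL l r)"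
  by (simp add: zeroL_def)

lemma fuse_list_encC:
  "length \<alpha> = length \<beta> \<Longrightarrow> fuse_list (encC \<alpha>) (encC \<beta>) = encC (map2 (\<noteq>) \<alpha> \<beta>)"
  by (auto simp: encC_def enc_def intro!: nth_equalityI)

definition braid_local :: "IS \<Rightarrow> IS \<Rightarrow> IS \<Rightarrow> complex" where
  "braid_local h1 h2 h3 = Bc (fuse h2 h3) (fuse h1 h3) (fuse h1 (fuse h2 h3)) h1 h2 h3"

lemma braid_local_untwisted:
  "x \<noteq> H16 \<Longrightarrow> y \<noteq> H16 \<Longrightarrow> braid_local x y z = (if x = Hhalf \<and> y = Hhalf then -1 else 1)"
  by (cases x; cases y; cases z) (simp_all add: braid_local_def Bc_def)

lemma braid_local_swap:
  "x \<noteq> H16 \<Longrightarrow> braid_local z x H0 * braid_local x z H0 = (if x = Hhalf \<and> z = H16 then -1 else 1)"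
  by (cases x; cases z) (simp_all add: braid_local_def Bc_def)

lemma braid_local_assoc:
  "x \<noteq> H16 \<Longrightarrow> y \<noteq> H16 \<Longrightarrow>
   braid_local z (fuse x y) H0 * braid_local x z y * braid_local y z H0 =
     (if fuse x y = Hhalf \<and> z = H16 then -1 else 1)"
  by (cases x; cases y; cases z) (simp_all add: braid_local_def Bc_def)

definition frame_prod :: "nat \<Rightarrow> nat \<Rightarrow> (nat \<Rightarrow> complex) \<Rightarrow> complex" where
  "frame_prod l r F = (\<Prod>i<l. F i) * (\<Prod>j\<in>{l..<l+r}. cnj (F j))"

lemma frame_prod_mult: "frame_prod l r F * frame_prod l r G = frame_prod l r (\<lambda>i. F i * G i)"
  by (simp add: frame_prod_def prod.distrib mult_ac)

lemma frame_prod_cong: "(\<And>i. i < l + r \<Longrightarrow> F i = G i) \<Longrightarrow> frame_prod l r F = frame_prod l r G"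
  unfolding frame_prod_def by (intro arg_cong2[where f = "(*)"] prod.cong) auto

lemma frame_prod_sign:
  "frame_prod l r (\<lambda>i. if P i then -1 else 1) = (-1) ^ card {i. i < l + r \<and> P i}"
proof -
  have "cnj (if P j then -1 else 1) = (if P j then -1 else 1)" for j
    by simp
  then have "frame_prod l r (\<lambda>i. if P i then -1 else 1) =
      (\<Prod>i\<in>{..<l} \<union> {l..<l+r}. if P i then -1 else 1)"
    by (simp add: frame_prod_def prod.union_disjoint ivl_disj_int)
  also have "{..<l} \<union> {l..<l+r} = {..<l+r}"
    by auto
  finally show ?thesis
    by (simp add: prod.If_cases Int_def)
qed

definition braid_coeff :: "nat \<Rightarrow> nat \<Rightarrow> IS list \<Rightarrow> IS list \<Rightarrow> IS list \<Rightarrow> complex" where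
  "braid_coeff l r g1 g2 g3 = frame_prod l r (\<lambda>i. braid_local (g1 ! i) (g2 ! i) (g3 ! i))"

lemma BL_eq_braid_coeff:
  "length g1 = l + r \<Longrightarrow> length g2 = l + r \<Longrightarrow> length g3 = l + r \<Longrightarrow>
   BL l r (fuse_list g2 g3) (fuse_list g1 g3) (fuse_list g1 (fuse_list g2 g3)) g1 g2 g3 =
     braid_coeff l r g1 g2 g3"
  unfolding BL_def braid_coeff_def frame_prod_def braid_local_def
  by (intro arg_cong2[where f = "(*)"] prod.cong) auto

definition monodromy_count :: "nat \<Rightarrow> nat \<Rightarrow> IS list \<Rightarrow> IS list \<Rightarrow> nat" where
  "monodromy_count l r p z = card {i. i < l + r \<and> p ! i = Hhalf \<and> z ! i = H16}"

lemma braid_coeff_untwisted: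
  assumes "H16 \<notin> set x" "H16 \<notin> set y" "length x = l + r" "length y = l + r"
  shows "braid_coeff l r x y z = (-1) ^ card {i. i < l + r \<and> x ! i = Hhalf \<and> y ! i = Hhalf}"
proof -
  have "x ! i \<noteq> H16" "y ! i \<noteq> H16" if "i < l + r" for i
    using assms that nth_mem by metis+
  then show ?thesis
    unfolding braid_coeff_def frame_prod_sign[symmetric]
    by (intro frame_prod_cong) (simp add: braid_local_untwisted)
qed

lemma braid_coeff_swap:
  assumes "H16 \<notin> set p" "length p = l + r" "length z = l + r"
  shows "braid_coeff l r z p (zeroL l r) * braid_coeff l r p z (zeroL l r) =
    (-1) ^ monodromy_count l r p z"
proof -
  have "p ! i \<noteq> H16" if "i < l + r" for i
    using assms that nth_mem by metis
  then show ?thesis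
    unfolding braid_coeff_def frame_prod_mult monodromy_count_def frame_prod_sign[symmetric]
    by (intro frame_prod_cong) (simp add: braid_local_swap zeroL_def)
qed

lemma braid_coeff_assoc:
  assumes "H16 \<notin> set x" "H16 \<notin> set y" "length x = l + r" "length y = l + r" "length z = l + r"
  shows "braid_coeff l r z (fuse_list x y) (zeroL l r) * braid_coeff l r x z y *
      braid_coeff l r y z (zeroL l r) = (-1) ^ monodromy_count l r (fuse_list x y) z"
proof -
  have "x ! i \<noteq> H16" "y ! i \<noteq> H16" if "i < l + r" for i
    using assms that nth_mem by metis+
  with assms(3-5) show ?thesis
    unfolding braid_coeff_def frame_prod_mult monodromy_count_def frame_prod_sign[symmetric]
    by (intro frame_prod_cong) (simp add: braid_local_assoc zeroL_def)
qed

lemma sign_encC_eq_csize: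
  assumes "length \<alpha> = l + r" "length \<beta> = l + r"
  shows "(-1::complex) ^ card {i. i < l + r \<and> encC \<alpha> ! i = Hhalf \<and> encC \<beta> ! i = Hhalf} =
    (-1) powi csize l r (cmul \<alpha> \<beta>)"
proof -
  let ?A = "{i. i < l \<and> cmul \<alpha> \<beta> ! i}" and ?B = "{i. l \<le> i \<and> i < l + r \<and> cmul \<alpha> \<beta> ! i}"
  have "{i. i < l + r \<and> encC \<alpha> ! i = Hhalf \<and> encC \<beta> ! i = Hhalf} = ?A \<union> ?B"
    using assms by (auto simp: cmul_def encC_def enc_def split: if_splits)
  then have "card {i. i < l + r \<and> encC \<alpha> ! i = Hhalf \<and> encC \<beta> ! i = Hhalf} = card ?A + card ?B"
    by (simp add: card_Un_disjoint disjoint_iff)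
  moreover have "(-1::complex) powi csize l r (cmul \<alpha> \<beta>) = (-1) ^ card ?A * (-1) ^ card ?B"
    by (simp add: csize_def power_int_diff power_mult_distrib[symmetric] field_simps)
  ultimately show ?thesis by (simp add: power_add)
qed

lemma finite_grades: "finite (grades l r)"
  using finite_lists_length_eq[of "UNIV :: IS set" "l + r"] by (simp add: grades_def)

locale framed_alg =
  fixes l r :: nat
    and scale :: "complex \<Rightarrow> 'v::ab_group_add \<Rightarrow> 'v"
    and mult :: "'v \<Rightarrow> 'v \<Rightarrow> 'v"
    and proj :: "IS list \<Rightarrow> 'v \<Rightarrow> 'v"
    and one :: 'v
  assumes framed_algebra: "framed_algebra l r scale mult proj one"
begin

sublocale V: vector_space scale
  using framed_algebra by (simp add: framed_algebra_def)

lemma mult_hom_left: "module_hom scale scale (\<lambda>x. mult x z)"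
  using framed_algebra by (simp add: framed_algebra_def linear_iff_module_hom)

lemma mult_hom_right: "module_hom scale scale (mult z)"
  using framed_algebra by (simp add: framed_algebra_def linear_iff_module_hom)

lemma proj_hom: "module_hom scale scale (proj g)"
  using framed_algebra by (simp add: framed_algebra_def linear_iff_module_hom)

lemmas mult_add_left = module_hom.add[OF mult_hom_left]
  and mult_scale_left = module_hom.scale[OF mult_hom_left]
  and mult_zero_left = module_hom.zero[OF mult_hom_left]
  and mult_add_right = module_hom.add[OF mult_hom_right]
  and mult_scale_right = module_hom.scale[OF mult_hom_right]
  and mult_zero_right = module_hom.zero[OF mult_hom_right]
  and mult_sum_right = module_hom.sum[OF mult_hom_right]
  and proj_zero = module_hom.zero[OF proj_hom]

lemma proj_idem: "x \<in> range (proj g) \<Longrightarrow> proj g x = x"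
  using framed_algebra by (auto simp: framed_algebra_def)

lemma sum_proj: "(\<Sum>g\<in>grades l r. proj g x) = x"
  using framed_algebra by (simp add: framed_algebra_def)

lemma in_range_projI:
  assumes "\<And>h. h \<noteq> g \<Longrightarrow> proj h x = 0"
  shows "x \<in> range (proj g)"
proof -
  have "x = (\<Sum>h\<in>grades l r. if h = g then proj g x else 0)"
    by (subst sum_proj[symmetric]) (use assms in \<open>intro sum.cong, auto\<close>)
  also have "\<dots> = (if g \<in> grades l r then proj g x else 0)"
    using finite_grades by simp
  finally show ?thesis
    by (metis rangeI proj_zero)
qed

lemma mult_in_range_proj:
  assumes "x \<in> range (proj g1)" "y \<in> range (proj g2)" "unique_fusion g1 g2"
  shows "mult x y \<in> range (proj (fuse_list g1 g2))"
proof (rule in_range_projI)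
  fix h
  assume "h \<noteq> fuse_list g1 g2"
  then have "h \<notin> fusionL g1 g2"
    using fusionL_eq_fuse_list[OF assms(3)] by simp
  with framed_algebra assms(1,2) show "proj h (mult x y) = 0"
    by (simp add: framed_algebra_def)
qed

lemma one_in_range_proj: "one \<in> range (proj (zeroL l r))"
proof -
  have "range (proj (zeroL l r)) = {scale c one | c. True}"
    using framed_algebra unfolding framed_algebra_def by (elim conjE) assumption
  then have "scale 1 one \<in> range (proj (zeroL l r))"
    by blast
  then show ?thesis
    by simp
qed

lemma mult_one_right [simp]: "mult x one = x"
  using framed_algebra by (simp add: framed_algebra_def)

lemma braiding_axiom:
  assumes "g0 \<in> grades l r" "g1 \<in> grades l r" "g2 \<in> grades l r" "g3 \<in> grades l r"
    and "a1 \<in> range (proj g1)" "a2 \<in> range (proj g2)" "a3 \<in> range (proj g3)"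
    and "g' \<in> AL g0 g2 g1 g3"
  shows "proj g0 (mult a2 (proj g' (mult a1 a3))) =
    (\<Sum>g\<in>AL g0 g1 g2 g3. scale (BL l r g g' g0 g1 g2 g3) (proj g0 (mult a1 (proj g (mult a2 a3)))))"
  using framed_algebra assms by (simp add: framed_algebra_def)

lemma braided_left_commute:
  assumes g: "g1 \<in> grades l r" "g2 \<in> grades l r" "g3 \<in> grades l r"
    and u12: "unique_fusion g1 g2" and u13: "unique_fusion g1 g3" and u23: "unique_fusion g2 g3"
    and a: "a1 \<in> range (proj g1)" "a2 \<in> range (proj g2)" "a3 \<in> range (proj g3)"
  shows "mult a2 (mult a1 a3) = scale (braid_coeff l r g1 g2 g3) (mult a1 (mult a2 a3))"
proof -
  define g0 where "g0 = fuse_list g1 (fuse_list g2 g3)"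
  have u1_23: "unique_fusion g1 (fuse_list g2 g3)"
    using u12 u13 by (rule unique_fusion_fuse_list)
  have u2_13: "unique_fusion g2 (fuse_list g1 g3)"
    using u12 u23 unique_fusion_commute unique_fusion_fuse_list by blast
  have g0_swap: "fuse_list g2 (fuse_list g1 g3) = g0"
    unfolding g0_def using u12 u13 u23 by (rule fuse_list_left_commute)
  have g0: "g0 \<in> grades l r"
    using g by (simp add: g0_def grades_def)
  have a13: "mult a1 a3 \<in> range (proj (fuse_list g1 g3))"
    using a u13 by (blast intro: mult_in_range_proj)
  have a23: "mult a2 a3 \<in> range (proj (fuse_list g2 g3))"
    using a u23 by (blast intro: mult_in_range_proj)
  have lhs: "mult a2 (mult a1 a3) \<in> range (proj g0)"
    using mult_in_range_proj[OF a(2) a13 u2_13] g0_swap by simp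
  have rhs: "mult a1 (mult a2 a3) \<in> range (proj g0)"
    using mult_in_range_proj[OF a(1) a23 u1_23] by (simp add: g0_def)
  have "length g1 = l + r" "length g2 = l + r" "length g3 = l + r"
    using g by (simp_all add: grades_def)
  then have "BL l r (fuse_list g2 g3) (fuse_list g1 g3) g0 g1 g2 g3 = braid_coeff l r g1 g2 g3"
    unfolding g0_def by (rule BL_eq_braid_coeff)
  moreover have "proj g0 (mult a2 (proj (fuse_list g1 g3) (mult a1 a3))) =
      scale (BL l r (fuse_list g2 g3) (fuse_list g1 g3) g0 g1 g2 g3)
        (proj g0 (mult a1 (proj (fuse_list g2 g3) (mult a2 a3))))"
    using braiding_axiom[OF g0 g a, of "fuse_list g1 g3"] AL_unique_fusion[OF u12 u13 u23]
    by (simp add: g0_def)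
  ultimately show ?thesis
    by (simp only: proj_idem[OF a13] proj_idem[OF a23] proj_idem[OF lhs] proj_idem[OF rhs])
qed

lemma braided_commute:
  assumes "g1 \<in> grades l r" "g2 \<in> grades l r" "unique_fusion g1 g2"
    and "a1 \<in> range (proj g1)" "a2 \<in> range (proj g2)"
  shows "mult a2 a1 = scale (braid_coeff l r g1 g2 (zeroL l r)) (mult a1 a2)"
proof -
  have "zeroL l r \<in> grades l r"
    by (simp add: grades_def zeroL_def)
  moreover have "unique_fusion g (zeroL l r)" if "g \<in> grades l r" for g
    using that by (simp add: unique_fusion_untwisted_right H16_notin_zeroL grades_def zeroL_def)
  ultimately show ?thesis
    using braided_left_commute[OF _ _ _ _ _ _ _ _ one_in_range_proj] assms by simp
qed

lemma eq_zero_if_neg_self: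
  assumes "scale (-1) w = w"
  shows "w = 0"
proof -
  have "scale 2 w = w + w"
    using V.scale_left_distrib[of 1 1 w] by simp
  also have "\<dots> = w + scale (-1) w"
    using assms by simp
  also have "\<dots> = 0"
    by (simp add: V.scale_minus_left)
  finally show ?thesis
    by simp
qed

lemma mult_eq_zero_if_odd_monodromy:
  assumes p: "p \<in> grades l r" "H16 \<notin> set p" and z: "z \<in> grades l r"
    and x: "x \<in> range (proj p)" and v: "v \<in> range (proj z)"
    and odd: "odd (monodromy_count l r p z)"
  shows "mult x v = 0"
proof -
  have u: "unique_fusion z p" "unique_fusion p z"
    using p z by (simp_all add: unique_fusion_untwisted grades_def)
  have "mult x v = scale (braid_coeff l r z p (zeroL l r)) (mult v x)"
    using braided_commute[OF z p(1) u(1) v x] .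
  also have "mult v x = scale (braid_coeff l r p z (zeroL l r)) (mult x v)"
    using braided_commute[OF p(1) z u(2) x v] .
  also have "scale (braid_coeff l r z p (zeroL l r))
      (scale (braid_coeff l r p z (zeroL l r)) (mult x v)) = scale (-1) (mult x v)"
    using braid_coeff_swap[of p l r z] p z odd by (simp add: grades_def)
  finally show ?thesis
    by (rule eq_zero_if_neg_self[OF sym])
qed

lemma mult_assoc_untwisted:
  assumes x: "x \<in> grades l r" "H16 \<notin> set x" and y: "y \<in> grades l r" "H16 \<notin> set y"
    and z: "z \<in> grades l r"
    and a1: "a1 \<in> range (proj x)" and a2: "a2 \<in> range (proj y)" and v: "v \<in> range (proj z)"
  shows "mult a1 (mult a2 v) = mult (mult a1 a2) v"
proof -
  define p where "p = fuse_list x y"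
  have len: "length x = l + r" "length y = l + r" "length z = l + r"
    using x y z by (simp_all add: grades_def)
  have p: "p \<in> grades l r" "H16 \<notin> set p"
    using x y fuse_ne_H16 by (auto simp: p_def grades_def in_set_conv_nth)
  have a12: "mult a1 a2 \<in> range (proj p)"
    unfolding p_def using a1 a2 x y len by (simp add: mult_in_range_proj unique_fusion_untwisted)
  have "mult (mult a1 a2) v = scale (braid_coeff l r z p (zeroL l r)) (mult v (mult a1 a2))"
    using braided_commute[OF z p(1) _ v a12] p z by (simp add: unique_fusion_untwisted grades_def)
  also have "mult v (mult a1 a2) = scale (braid_coeff l r x z y) (mult a1 (mult v a2))"
    using braided_left_commute[OF x(1) z y(1) _ _ _ a1 v a2] x y len
    by (simp add: unique_fusion_untwisted)
  also have "mult v a2 = scale (braid_coeff l r y z (zeroL l r)) (mult a2 v)"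
    using braided_commute[OF y(1) z _ a2 v] y len by (simp add: unique_fusion_untwisted)
  finally have "mult (mult a1 a2) v = scale ((-1) ^ monodromy_count l r p z) (mult a1 (mult a2 v))"
    using braid_coeff_assoc[OF x(2) y(2) len] by (simp add: mult_scale_right p_def mult_ac)
  moreover have "mult (mult a1 a2) v = 0" if "odd (monodromy_count l r p z)"
    using mult_eq_zero_if_odd_monodromy[OF p z a12 v that] .
  ultimately show ?thesis
    by (cases "even (monodromy_count l r p z)") auto
qed

lemma mult_left_commute_untwisted:
  assumes x: "x \<in> grades l r" "H16 \<notin> set x" and y: "y \<in> grades l r" "H16 \<notin> set y"
    and z: "z \<in> grades l r"
    and a1: "a1 \<in> range (proj x)" and a2: "a2 \<in> range (proj y)" and v: "v \<in> range (proj z)"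
  shows "mult a2 (mult a1 v) =
    scale ((-1) ^ card {i. i < l + r \<and> x ! i = Hhalf \<and> y ! i = Hhalf}) (mult a1 (mult a2 v))"
proof -
  have "length x = l + r" "length y = l + r" "length z = l + r"
    using x y z by (simp_all add: grades_def)
  then show ?thesis
    using braided_left_commute[OF x(1) y(1) z _ _ _ a1 a2 v] braid_coeff_untwisted x y
    by (simp add: unique_fusion_untwisted)
qed

lemma mult_in_range_proj_encC:
  assumes "a \<in> range (proj (encC \<alpha>))" "b \<in> range (proj (encC \<beta>))" "length \<alpha> = length \<beta>"
  shows "mult a b \<in> range (proj (encC (map2 (\<noteq>) \<alpha> \<beta>)))"
  using mult_in_range_proj[OF assms(1,2)] assms(3)
  by (simp add: fuse_list_encC unique_fusion_untwisted_left H16_notin_encC)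

definition AS0_gens :: "'v set" where
  "AS0_gens = (\<Union>\<alpha>\<in>{\<alpha>. length \<alpha> = l + r}. range (proj (encC \<alpha>)))"

lemma AS0_eq_span: "AS0 l r scale proj = V.span AS0_gens"
  by (simp add: AS0_def AS0_gens_def)

lemma mult_mem_AS0:
  assumes x: "x \<in> AS0 l r scale proj" and y: "y \<in> AS0 l r scale proj"
  shows "mult x y \<in> AS0 l r scale proj"
proof -
  have gen: "mult a b \<in> AS0_gens" if ab: "a \<in> AS0_gens" "b \<in> AS0_gens" for a b
  proof -
    obtain \<alpha> \<beta> where len: "length \<alpha> = l + r" "length \<beta> = l + r"
      and a: "a \<in> range (proj (encC \<alpha>))" and b: "b \<in> range (proj (encC \<beta>))"
      using ab unfolding AS0_gens_def by blast
    have "mult a b \<in> range (proj (encC (map2 (\<noteq>) \<alpha> \<beta>)))"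
      using a b by (rule mult_in_range_proj_encC) (simp add: len)
    moreover have "length (map2 (\<noteq>) \<alpha> \<beta>) = l + r"
      using len by simp
    ultimately show ?thesis
      unfolding AS0_gens_def by blast
  qed
  have gen_left: "mult a y \<in> V.span AS0_gens" if a: "a \<in> AS0_gens" for a
    using y unfolding AS0_eq_span
  proof (induction rule: V.span_induct_alt)
    case base
    then show ?case
      by (simp add: mult_zero_right V.span_zero)
  next
    case (step c b y')
    then show ?case
      using gen[OF a step(1)]
      by (simp add: mult_add_right mult_scale_right V.span_add V.span_scale V.span_base)
  qed
  show ?thesis
    using x unfolding AS0_eq_span
  proof (induction rule: V.span_induct_alt)
    case base
    then show ?case
      by (simp add: mult_zero_left V.span_zero)
  next
    case (step c a x')
    then show ?case
      using gen_left[OF step(1)]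
      by (simp add: mult_add_left mult_scale_left V.span_add V.span_scale)
  qed
qed

lemma mult_assoc_AS0:
  assumes x: "x \<in> AS0 l r scale proj" and y: "y \<in> AS0 l r scale proj"
  shows "mult x (mult y w) = mult (mult x y) w"
proof -
  have gen: "mult a (mult b w) = mult (mult a b) w" if ab: "a \<in> AS0_gens" "b \<in> AS0_gens" for a b
  proof -
    obtain \<alpha> \<beta> where a: "a \<in> range (proj (encC \<alpha>))" "encC \<alpha> \<in> grades l r"
      and b: "b \<in> range (proj (encC \<beta>))" "encC \<beta> \<in> grades l r"
      using ab unfolding AS0_gens_def grades_def by auto
    have "mult a (mult b w) = (\<Sum>g\<in>grades l r. mult a (mult b (proj g w)))"
      by (subst (1) sum_proj[symmetric]) (simp add: mult_sum_right)
    also have "\<dots> = (\<Sum>g\<in>grades l r. mult (mult a b) (proj g w))"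
      using mult_assoc_untwisted[OF a(2) H16_notin_encC b(2) H16_notin_encC _ a(1) b(1) rangeI]
      by simp
    also have "\<dots> = mult (mult a b) w"
      by (subst (3) sum_proj[symmetric]) (simp add: mult_sum_right)
    finally show ?thesis .
  qed
  have gen_left: "mult a (mult y w) = mult (mult a y) w" if a: "a \<in> AS0_gens" for a
    using y unfolding AS0_eq_span
  proof (induction rule: V.span_induct_alt)
    case base
    then show ?case
      by (simp add: mult_zero_right mult_zero_left)
  next
    case (step c b y')
    then show ?case
      using gen[OF a step(1)]
      by (simp add: mult_add_right mult_scale_right mult_add_left mult_scale_left)
  qed
  show ?thesis
    using x unfolding AS0_eq_span
  proof (induction rule: V.span_induct_alt)
    case base
    then show ?case
      by (simp add: mult_zero_right mult_zero_left)
  next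
    case (step c a x')
    then show ?case
      using gen_left[OF step(1)]
      by (simp add: mult_add_right mult_scale_right mult_add_left mult_scale_left)
  qed
qed

end

theorem mainTheorem6:
  fixes l r :: nat
    and scale :: "complex \<Rightarrow> 'v::ab_group_add \<Rightarrow> 'v"
    and mult :: "'v \<Rightarrow> 'v \<Rightarrow> 'v"
    and proj :: "IS list \<Rightarrow> 'v \<Rightarrow> 'v"
    and one :: 'v
    and \<alpha>1 \<alpha>2 d c :: "bool list"
    and a1 a2 v :: 'v
  assumes S: "simple_framed_algebra l r scale mult proj one"
    and h\<alpha>1: "\<alpha>1 \<in> C_S l r proj" and h\<alpha>2: "\<alpha>2 \<in> C_S l r proj"
    and hdc: "(d, c) \<in> I_S l r proj"
    and ha1: "a1 \<in> range (proj (encC \<alpha>1))"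
    and ha2: "a2 \<in> range (proj (encC \<alpha>2))"
    and hv: "v \<in> range (proj (enc d c))"
  shows "mult a2 (mult a1 v) = scale ((-1) powi csize l r (cmul \<alpha>1 \<alpha>2)) (mult a1 (mult a2 v))
       \<and> mult a1 (mult a2 v) = mult (mult a1 a2) v
       \<and> (\<forall>x\<in>AS0 l r scale proj. \<forall>y\<in>AS0 l r scale proj. mult x y \<in> AS0 l r scale proj)
       \<and> (\<forall>x\<in>AS0 l r scale proj. \<forall>y\<in>AS0 l r scale proj. \<forall>z\<in>AS0 l r scale proj.
             mult (mult x y) z = mult x (mult y z))
       \<and> (\<forall>x\<in>AS0 l r scale proj. \<forall>y\<in>AS0 l r scale proj. \<forall>w.
             mult x (mult y w) = mult (mult x y) w)"
proof -
  interpret framed_alg l r scale mult proj one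
    using S by unfold_locales (simp add: simple_framed_algebra_def)
  have len: "length \<alpha>1 = l + r" "length \<alpha>2 = l + r"
    using h\<alpha>1 h\<alpha>2 by (simp_all add: C_S_def)
  then have grades: "encC \<alpha>1 \<in> grades l r" "encC \<alpha>2 \<in> grades l r"
    by (simp_all add: grades_def)
  have "enc d c \<in> grades l r"
    using hdc by (simp add: I_S_def grades_def enc_def)
  note homogeneous = grades(1) H16_notin_encC grades(2) H16_notin_encC this ha1 ha2 hv
  have "mult a2 (mult a1 v) = scale ((-1) powi csize l r (cmul \<alpha>1 \<alpha>2)) (mult a1 (mult a2 v))"
    using mult_left_commute_untwisted[OF homogeneous] sign_encC_eq_csize[OF len] by simp
  then show ?thesis
    by (intro conjI ballI allI mult_assoc_untwisted[OF homogeneous] mult_mem_AS0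
        mult_assoc_AS0 mult_assoc_AS0[symmetric])
qed

end
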